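(* Under direct parameterization $\pi_\theta(a|s)=\theta_{s,a}$, and assuming each $\sigma(P_{s,a},\cdot)$ is differentiable, for all $s\in\mathcal S$, $a\in\mathcal A$, $$\frac{\partial\,\mathbb E_{s_0\sim\rho}V^{\pi_\theta}(s_0)}{\partial\theta_{s,a}}=\frac{1}{1-\gamma}\,d^{\pi_\theta,\hat P^{\pi_\theta}}(s)\,Q^{\pi_\theta}(s,a).$$
   Context: $\mathcal S$ and $\mathcal A$ are finite sets; $\Delta(\mathcal X)$ denotes the probability simplex over a finite set $\mathcal X$. $P=\{P_{s,a}\}$ with $P_{s,a}\in\Delta(\mathcal S)$ is the nominal transition kernel, $r:\mathcal S\times\mathcal A\to[0,1]$, $\gamma\in[0,1)$, $\rho\in\Delta(\mathcal S)$. A stationary policy is a map $\pi:\mathcal S\to\Delta(\mathcal A)$. A function $\sigma:\mathbb R^{\mathcal S}\to\mathbb R$ is a convex risk measure if (i) $V'\le V$ pointwise implies $\sigma(V)\le\sigma(V')$; (ii) $\sigma(V+m)=\sigma(V)-m$ for every constant $m$; (iii) $\sigma$ is convex. For each $(s,a)$ a convex risk measure $\sigma(P_{s,a},\cdot)$ is given, with penalty $D(\hat\mu,P_{s,a}):=\sup_{V}\big(-\sigma(P_{s,a},V)-\mathbb E_{s'\sim\hat\mu}V(s')\big)$. For a policy $\pi$, $V^\pi$ is the unique solution of $V^\pi(s)=\sum_a\pi(a|s)(r(s,a)-\gamma\sigma(P_{s,a},V^\pi))$, $Q^\pi(s,a):=r(s,a)-\gamma\sigma(P_{s,a},V^\pi)$,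 $\hat P^\pi_{s,a}\in\arg\min_{\hat\mu\in\Delta(\mathcal S)}\big(D(\hat\mu,P_{s,a})+\mathbb E_{s'\sim\hat\mu}V^\pi(s')\big)$. For a policy $\pi$ and stationary kernel $K$, $d^{\pi,K}(s):=(1-\gamma)\sum_{t\ge0}\gamma^t\Pr(s_t=s)$ with $s_0\sim\rho$, $a_t\sim\pi(\cdot|s_t)$, $s_{t+1}\sim K_{s_t,a_t}$. The partial derivative is taken treating $V^{\pi_\theta}$ as a function of the vector $(\theta_{s,a})$ in a neighbourhood of its value. *)

theory Defs
  imports "HOL-Analysis.Analysis"
begin

definition is_dist :: "('x::finite \<Rightarrow> real) \<Rightarrow> bool" where
  "is_dist \<mu> \<longleftrightarrow> (\<forall>x. 0 \<le> \<mu> x) \<and> (\<Sum>x\<in>UNIV. \<mu> x) = 1"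

definition convex_risk_measure :: "(real ^ 's \<Rightarrow> real) \<Rightarrow> bool" where
  "convex_risk_measure \<sigma> \<longleftrightarrow>
     (\<forall>V V'. (\<forall>s. V' $ s \<le> V $ s) \<longrightarrow> \<sigma> V \<le> \<sigma> V') \<and>
     (\<forall>V m. \<sigma> (V + (\<chi> s. m)) = \<sigma> V - m) \<and>
     convex_on UNIV \<sigma>"

definition penalty :: "(real ^ 's \<Rightarrow> real) \<Rightarrow> ('s::finite \<Rightarrow> real) \<Rightarrow> ereal" where
  "penalty \<sigma>P \<mu> = (SUP V. ereal (- \<sigma>P V - (\<Sum>s'\<in>UNIV. \<mu> s' * V $ s')))"

definition Vpi :: "(('s::finite \<Rightarrow> real) \<Rightarrow> real ^ 's \<Rightarrow> real) \<Rightarrow> ('s \<Rightarrow> 'a::finite \<Rightarrow> 's \<Rightarrow> real)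
     \<Rightarrow> ('s \<Rightarrow> 'a \<Rightarrow> real) \<Rightarrow> real \<Rightarrow> ('s \<Rightarrow> 'a \<Rightarrow> real) \<Rightarrow> real ^ 's" where
  "Vpi \<sigma> P r \<gamma> \<pi> = (THE V. \<forall>s. V $ s = (\<Sum>a\<in>UNIV. \<pi> s a * (r s a - \<gamma> * \<sigma> (P s a) V)))"

definition Qpi :: "(('s::finite \<Rightarrow> real) \<Rightarrow> real ^ 's \<Rightarrow> real) \<Rightarrow> ('s \<Rightarrow> 'a::finite \<Rightarrow> 's \<Rightarrow> real)
     \<Rightarrow> ('s \<Rightarrow> 'a \<Rightarrow> real) \<Rightarrow> real \<Rightarrow> ('s \<Rightarrow> 'a \<Rightarrow> real) \<Rightarrow> 's \<Rightarrow> 'a \<Rightarrow> real" where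
  "Qpi \<sigma> P r \<gamma> \<pi> s a = r s a - \<gamma> * \<sigma> (P s a) (Vpi \<sigma> P r \<gamma> \<pi>)"

fun state_dist :: "('s::finite \<Rightarrow> real) \<Rightarrow> ('s \<Rightarrow> 'a::finite \<Rightarrow> real) \<Rightarrow> ('s \<Rightarrow> 'a \<Rightarrow> 's \<Rightarrow> real)
     \<Rightarrow> nat \<Rightarrow> 's \<Rightarrow> real" where
  "state_dist \<rho> \<pi> K 0 s' = \<rho> s'"
| "state_dist \<rho> \<pi> K (Suc t) s' =
     (\<Sum>s\<in>UNIV. state_dist \<rho> \<pi> K t s * (\<Sum>a\<in>UNIV. \<pi> s a * K s a s'))"

definition occupancy :: "real \<Rightarrow> ('s::finite \<Rightarrow> real) \<Rightarrow> ('s \<Rightarrow> 'a::finite \<Rightarrow> real)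
     \<Rightarrow> ('s \<Rightarrow> 'a \<Rightarrow> 's \<Rightarrow> real) \<Rightarrow> 's \<Rightarrow> real" where
  "occupancy \<gamma> \<rho> \<pi> K s = (1 - \<gamma>) * (\<Sum>t. \<gamma> ^ t * state_dist \<rho> \<pi> K t s)"

definition perturb :: "('s \<Rightarrow> 'a \<Rightarrow> real) \<Rightarrow> 's \<Rightarrow> 'a \<Rightarrow> real \<Rightarrow> 's \<Rightarrow> 'a \<Rightarrow> real" where
  "perturb \<theta> s a t = (\<lambda>s' a'. \<theta> s' a' + (if s' = s \<and> a' = a then t else 0))"

end

theory Submission
  imports Defs
begin

text \<open>
  Convex risk measures are 1-Lipschitz for the sup norm, so the robust Bellman operator of a
  policy is a sup-norm contraction, and perturbing the coordinate \<open>\<theta> s a\<close> by \<open>t\<close> moves its fixed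
  point \<open>V\<close> by \<open>O(t)\<close>. The gradient of a differentiable convex risk measure is a distribution
  attaining the supremum in the penalty; comparing it with the minimiser \<open>Phat\<close> shows that
  \<open>-Phat s' a'\<close> is a subgradient, hence the gradient, of \<open>\<sigma> (P s' a')\<close> at \<open>V\<close>. Subtracting the
  Bellman equations of the perturbed and unperturbed policy and linearising gives
  \<open>(I - \<gamma> M) (V\<^sub>t - V) = t Q(s,a) e\<^sub>s + o(t)\<close>, where \<open>M\<close> is the transition matrix of \<open>\<theta>\<close> under
  \<open>Phat\<close>; pairing with the discounted occupancy measure \<open>d\<close>, which satisfies
  \<open>d (I - \<gamma> M) = (1 - \<gamma>) \<rho>\<close>, yields the formula.
\<close>

section \<open>Contractions for the sup norm\<close>

lemma infnorm_le_iff_cart: "infnorm (x :: real ^ 'n) \<le> b \<longleftrightarrow> (\<forall>i. \<bar>x $ i\<bar> \<le> b)"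
proof
  assume "infnorm x \<le> b"
  then show "\<forall>i. \<bar>x $ i\<bar> \<le> b" using component_le_infnorm_cart order_trans by blast
next
  assume "\<forall>i. \<bar>x $ i\<bar> \<le> b"
  then show "infnorm x \<le> b" unfolding infnorm_cart by (auto intro!: cSup_least)
qed

lemma infnorm_contraction_ex1_fixpoint:
  fixes T :: "'a::euclidean_space \<Rightarrow> 'a"
  assumes c: "0 \<le> c" "c < 1" and contr: "\<And>x y. infnorm (T x - T y) \<le> c * infnorm (x - y)"
  shows "\<exists>!x. T x = x"
proof -
  have iter: "infnorm ((T ^^ k) x - (T ^^ k) y) \<le> c ^ k * infnorm (x - y)" for k x y
  proof (induction k)
    case (Suc k)
    have "infnorm ((T ^^ Suc k) x - (T ^^ Suc k) y) \<le> c * infnorm ((T ^^ k) x - (T ^^ k) y)"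
      using contr by simp
    also have "\<dots> \<le> c * (c ^ k * infnorm (x - y))" using Suc c(1) by (rule mult_left_mono)
    finally show ?case by (simp add: mult.assoc)
  qed simp
  txt \<open>\<open>infnorm\<close> is not the norm of \<open>'a\<close>, so Banach's theorem is applied to a power of \<open>T\<close>,
    which contracts the Euclidean norm.\<close>
  obtain k where k: "c ^ k < 1 / sqrt DIM('a)"
    using real_arch_pow_inv[of "1 / sqrt DIM('a)" c] c by auto
  have d: "0 \<le> sqrt DIM('a) * c ^ k" "sqrt DIM('a) * c ^ k < 1"
    using k c by (auto simp: field_simps)
  have "dist ((T ^^ k) x) ((T ^^ k) y) \<le> (sqrt DIM('a) * c ^ k) * dist x y" for x y
  proof -
    have "dist ((T ^^ k) x) ((T ^^ k) y) \<le> sqrt DIM('a) * infnorm ((T ^^ k) x - (T ^^ k) y)"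
      unfolding dist_norm by (rule norm_le_infnorm)
    also have "\<dots> \<le> sqrt DIM('a) * (c ^ k * norm (x - y))"
    proof (rule mult_left_mono)
      show "infnorm ((T ^^ k) x - (T ^^ k) y) \<le> c ^ k * norm (x - y)"
        using iter[of k x y] infnorm_le_norm[of "x - y"] c(1)
        by (meson order_trans mult_left_mono zero_le_power)
    qed simp
    finally show ?thesis by (simp add: dist_norm mult.assoc)
  qed
  then obtain x where x: "(T ^^ k) x = x" and unique: "\<And>y. (T ^^ k) y = y \<Longrightarrow> y = x"
    using banach_fix_type[OF d, of "T ^^ k"] by metis
  have "(T ^^ k) (T x) = T x" by (metis x funpow_swap1)
  then have "T x = x" by (rule unique)
  moreover have "(T ^^ k) y = y" if "T y = y" for y
    using that by (induction k) auto
  ultimately show ?thesis using unique by blast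
qed

lemma infnorm_contraction_fixpoint_dist:
  fixes T :: "'a::euclidean_space \<Rightarrow> 'a"
  assumes "c < 1" and contr: "\<And>x y. infnorm (T x - T y) \<le> c * infnorm (x - y)" and "T x = x"
  shows "infnorm (x - y) \<le> infnorm (T y - y) / (1 - c)"
proof -
  have "infnorm (x - y) \<le> infnorm (T x - T y) + infnorm (T y - y)"
    using infnorm_triangle[of "T x - T y" "T y - y"] \<open>T x = x\<close> by simp
  also have "\<dots> \<le> c * infnorm (x - y) + infnorm (T y - y)" using contr by simp
  finally show ?thesis using \<open>c < 1\<close> by (simp add: field_simps)
qed

section \<open>One-sided derivatives and subgradients\<close>

lemma has_derivative_right_quotient:
  fixes f :: "'a::real_normed_vector \<Rightarrow> real"
  assumes "(f has_derivative f') (at x)"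
  shows "((\<lambda>\<tau>. (f (x + \<tau> *\<^sub>R h) - f x) / \<tau>) \<longlongrightarrow> f' h) (at_right 0)"
proof -
  have "((\<lambda>\<tau>::real. x + \<tau> *\<^sub>R h) has_derivative (\<lambda>\<tau>. \<tau> *\<^sub>R h)) (at 0)"
    by (auto intro!: derivative_eq_intros)
  from has_derivative_compose[OF this, of f f'] assms
  have "((\<lambda>\<tau>. f (x + \<tau> *\<^sub>R h)) has_derivative (\<lambda>\<tau>. f' (\<tau> *\<^sub>R h))) (at 0)" by simp
  moreover have "(\<lambda>\<tau>. f' (\<tau> *\<^sub>R h)) = (*) (f' h)"
    using has_derivative_linear[OF assms] by (auto simp: linear_scale)
  ultimately have "((\<lambda>\<tau>. f (x + \<tau> *\<^sub>R h)) has_field_derivative f' h) (at 0)"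
    by (simp add: has_field_derivative_def)
  then have "((\<lambda>\<tau>. (f (x + \<tau> *\<^sub>R h) - f x) / \<tau>) \<longlongrightarrow> f' h) (at 0)"
    by (simp add: has_field_derivative_iff)
  then show ?thesis by (rule filterlim_mono) (auto intro: at_le)
qed

lemma convex_on_has_derivative_le:
  fixes f :: "'a::real_normed_vector \<Rightarrow> real"
  assumes cv: "convex_on UNIV f" and d: "(f has_derivative f') (at x)"
  shows "f x + f' h \<le> f (x + h)"
proof -
  have "f' h \<le> f (x + h) - f x"
  proof (rule tendsto_le[OF _ tendsto_const has_derivative_right_quotient[OF d]])
    show "eventually (\<lambda>\<tau>. (f (x + \<tau> *\<^sub>R h) - f x) / \<tau> \<le> f (x + h) - f x) (at_right 0)"
      unfolding eventually_at_right_field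
    proof (intro exI[of _ 1] conjI allI impI)
      fix \<tau> :: real assume \<tau>: "0 < \<tau>" "\<tau> < 1"
      have "x + \<tau> *\<^sub>R h = (1 - \<tau>) *\<^sub>R x + \<tau> *\<^sub>R (x + h)" by (simp add: algebra_simps)
      then have "f (x + \<tau> *\<^sub>R h) \<le> (1 - \<tau>) * f x + \<tau> * f (x + h)"
        using convex_onD[OF cv, of \<tau> x "x + h"] \<tau> by simp
      then have "f (x + \<tau> *\<^sub>R h) - f x \<le> (f (x + h) - f x) * \<tau>" by (simp add: algebra_simps)
      then show "(f (x + \<tau> *\<^sub>R h) - f x) / \<tau> \<le> f (x + h) - f x"
        using \<tau> by (simp add: pos_divide_le_eq)
    qed simp
  qed simp
  then show ?thesis by simp
qed

lemma has_derivative_eq_subgradient: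
  fixes f :: "'a::real_normed_vector \<Rightarrow> real"
  assumes d: "(f has_derivative f') (at x)" and "linear g" and sub: "\<And>h. f x + g h \<le> f (x + h)"
  shows "f' = g"
proof -
  have ge: "g h \<le> f' h" for h
  proof (rule tendsto_le[OF _ has_derivative_right_quotient[OF d] tendsto_const])
    show "eventually (\<lambda>\<tau>. g h \<le> (f (x + \<tau> *\<^sub>R h) - f x) / \<tau>) (at_right 0)"
      unfolding eventually_at_right_field
    proof (intro exI[of _ 1] conjI allI impI)
      fix \<tau> :: real assume "0 < \<tau>" "\<tau> < 1"
      moreover have "\<tau> * g h \<le> f (x + \<tau> *\<^sub>R h) - f x"
        using sub[of "\<tau> *\<^sub>R h"] linear_scale[OF \<open>linear g\<close>] by simp
      ultimately show "g h \<le> (f (x + \<tau> *\<^sub>R h) - f x) / \<tau>"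
        by (simp add: pos_le_divide_eq mult.commute)
    qed simp
  qed simp
  have "f' h = g h" for h
    using ge[of h] ge[of "- h"] linear_neg[OF has_derivative_linear[OF d]] linear_neg[OF \<open>linear g\<close>]
    by fastforce
  then show ?thesis by blast
qed

lemma tendsto_at_0_of_lipschitz:
  fixes g :: "real \<Rightarrow> 'a::real_normed_vector"
  assumes "eventually (\<lambda>t. norm (g t - x) \<le> K * \<bar>t\<bar>) (at 0)"
  shows "(g \<longlongrightarrow> x) (at 0)"
proof (rule LIM_zero_cancel, rule tendsto_0_le[OF tendsto_ident_at])
  show "eventually (\<lambda>t. norm (g t - x) \<le> norm t * K) (at 0)"
    using assms by eventually_elim (simp add: mult.commute)
qed

lemma has_derivative_remainder_lipschitz:
  fixes f :: "'a::real_normed_vector \<Rightarrow> 'b::real_normed_vector" and g :: "real \<Rightarrow> 'a"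
  assumes d: "(f has_derivative f') (at x)"
    and bound: "eventually (\<lambda>t. norm (g t - x) \<le> K * \<bar>t\<bar>) (at 0)"
  shows "((\<lambda>t. (f (g t) - f x - f' (g t - x)) /\<^sub>R t) \<longlongrightarrow> 0) (at 0)"
proof -
  define R where "R y = (f y - f x - f' (y - x)) /\<^sub>R norm (y - x)" for y
  have "(g \<longlongrightarrow> x) (at 0)" using bound by (rule tendsto_at_0_of_lipschitz)
  moreover have "isCont R x"
    using d unfolding isCont_def has_derivative_at_within R_def by simp
  ultimately have "((\<lambda>t. R (g t)) \<longlongrightarrow> 0) (at 0)"
    using isCont_tendsto_compose[of x R g] by (simp add: R_def)
  then show ?thesis
  proof (rule tendsto_0_le)
    have f'0: "f' 0 = 0" using has_derivative_bounded_linear[OF d] by (simp add: linear_simps)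
    show "eventually (\<lambda>t. norm ((f (g t) - f x - f' (g t - x)) /\<^sub>R t) \<le> norm (R (g t)) * K) (at 0)"
      using bound eventually_neq_at_within[of 0 0 UNIV]
    proof eventually_elim
      case (elim t)
      have "norm (f (g t) - f x - f' (g t - x)) = norm (R (g t)) * norm (g t - x)"
        by (cases "g t = x") (simp_all add: R_def f'0)
      also have "\<dots> \<le> norm (R (g t)) * K * \<bar>t\<bar>" using elim by (simp add: mult_left_mono mult.assoc)
      finally have "norm (f (g t) - f x - f' (g t - x)) / \<bar>t\<bar> \<le> norm (R (g t)) * K"
        using elim by (simp add: pos_divide_le_eq)
      then show ?case by (simp add: divide_inverse mult.commute)
    qed
  qed
qed

section \<open>Gradients of convex risk measures\<close>

lemma linear_cart_representation:
  fixes f :: "real ^ 'n \<Rightarrow> real"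
  assumes "linear f"
  shows "f h = (\<Sum>i\<in>UNIV. h $ i * f (axis i 1))"
proof -
  have "f h = f (\<Sum>i\<in>UNIV. h $ i *\<^sub>R axis i 1)"
    using basis_expansion[of h] by (simp add: scalar_mult_eq_scaleR)
  also have "\<dots> = (\<Sum>i\<in>UNIV. h $ i * f (axis i 1))"
    using assms by (simp add: linear_sum linear_scale)
  finally show ?thesis .
qed

lemma convex_risk_measure_abs_diff_le:
  assumes "convex_risk_measure \<sigma>"
  shows "\<bar>\<sigma> V - \<sigma> W\<bar> \<le> infnorm (V - W)"
proof -
  have mono: "\<And>V V'. (\<forall>s. V' $ s \<le> V $ s) \<Longrightarrow> \<sigma> V \<le> \<sigma> V'"
    and transl: "\<And>V m. \<sigma> (V + (\<chi> s. m)) = \<sigma> V - m"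
    using assms unfolding convex_risk_measure_def by blast+
  define b where "b = infnorm (V - W)"
  have "\<bar>V $ i - W $ i\<bar> \<le> b" for i
    using component_le_infnorm_cart[of "V - W" i] by (simp add: b_def)
  then have "\<forall>s. V $ s \<le> (W + (\<chi> s. b)) $ s" "\<forall>s. W $ s \<le> (V + (\<chi> s. b)) $ s"
    by (auto simp: abs_le_iff algebra_simps)
  then have "\<sigma> (W + (\<chi> s. b)) \<le> \<sigma> V" "\<sigma> (V + (\<chi> s. b)) \<le> \<sigma> W" using mono by blast+
  then show ?thesis using transl[of W b] transl[of V b] by (simp add: b_def)
qed

lemma convex_risk_measure_derivative:
  assumes cr: "convex_risk_measure \<sigma>"
    and d: "(\<sigma> has_derivative (\<lambda>h. - (\<Sum>i\<in>UNIV. \<mu> i * h $ i))) (at V)"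
  shows "is_dist \<mu>" and "penalty \<sigma> \<mu> = ereal (- \<sigma> V - (\<Sum>i\<in>UNIV. \<mu> i * V $ i))"
proof -
  have mono: "\<And>V V'. (\<forall>s. V' $ s \<le> V $ s) \<Longrightarrow> \<sigma> V \<le> \<sigma> V'"
    and transl: "\<And>V m. \<sigma> (V + (\<chi> s. m)) = \<sigma> V - m" and cv: "convex_on UNIV \<sigma>"
    using cr unfolding convex_risk_measure_def by blast+
  have tan: "\<sigma> V - (\<Sum>i\<in>UNIV. \<mu> i * h $ i) \<le> \<sigma> (V + h)" for h
    using convex_on_has_derivative_le[OF cv d, of h] by simp
  have "0 \<le> \<mu> i" for i
  proof -
    have "\<sigma> (V + axis i 1) \<le> \<sigma> V" by (rule mono) (simp add: axis_def)
    then show ?thesis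
      using tan[of "axis i 1"] by (simp add: axis_def if_distrib sum.delta cong: if_cong)
  qed
  moreover have "(\<Sum>i\<in>UNIV. \<mu> i) = 1"
  proof -
    have "\<sigma> V - (\<Sum>i\<in>UNIV. \<mu> i) \<le> \<sigma> V - 1"
      using tan[of "\<chi> s. 1"] transl[of V 1] by simp
    moreover have "\<sigma> V + (\<Sum>i\<in>UNIV. \<mu> i) \<le> \<sigma> V + 1"
      using tan[of "\<chi> s. -1"] transl[of V "-1"] by (simp add: sum_negf)
    ultimately show ?thesis by linarith
  qed
  ultimately show "is_dist \<mu>" by (simp add: is_dist_def)
  show "penalty \<sigma> \<mu> = ereal (- \<sigma> V - (\<Sum>i\<in>UNIV. \<mu> i * V $ i))"
    unfolding penalty_def
  proof (rule antisym)
    show "(SUP W. ereal (- \<sigma> W - (\<Sum>i\<in>UNIV. \<mu> i * W $ i))) \<le> ereal (- \<sigma> V - (\<Sum>i\<in>UNIV. \<mu> i * V $ i))"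
    proof (rule SUP_least)
      fix W
      show "ereal (- \<sigma> W - (\<Sum>i\<in>UNIV. \<mu> i * W $ i)) \<le> ereal (- \<sigma> V - (\<Sum>i\<in>UNIV. \<mu> i * V $ i))"
        using tan[of "W - V"] by (simp add: algebra_simps sum_subtractf)
    qed
  qed (rule SUP_upper, simp)
qed

lemma convex_risk_measure_has_derivative_minimizer:
  assumes cr: "convex_risk_measure \<sigma>" and "\<sigma> differentiable (at V)"
    and min: "\<And>\<mu>. is_dist \<mu> \<Longrightarrow> penalty \<sigma> \<nu> + ereal (\<Sum>x\<in>UNIV. \<nu> x * V $ x)
        \<le> penalty \<sigma> \<mu> + ereal (\<Sum>x\<in>UNIV. \<mu> x * V $ x)"
  shows "(\<sigma> has_derivative (\<lambda>h. - (\<Sum>x\<in>UNIV. \<nu> x * h $ x))) (at V)"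
proof -
  obtain F where d: "(\<sigma> has_derivative F) (at V)"
    using \<open>\<sigma> differentiable (at V)\<close> unfolding differentiable_def by blast
  txt \<open>The gradient \<open>\<mu>\<close> of \<open>\<sigma>\<close> is a distribution attaining the penalty at \<open>V\<close>, so minimality of
    \<open>\<nu>\<close> makes \<open>-\<nu>\<close> a subgradient.\<close>
  moreover have "F = (\<lambda>h. - (\<Sum>x\<in>UNIV. \<nu> x * h $ x))"
  proof (rule has_derivative_eq_subgradient[OF d])
    show "linear (\<lambda>h. - (\<Sum>x\<in>UNIV. \<nu> x * h $ x))"
      by (rule linearI) (simp_all add: algebra_simps sum.distrib sum_distrib_left)
    define \<mu> where "\<mu> i = - F (axis i 1)" for i
    have "F h = - (\<Sum>i\<in>UNIV. \<mu> i * h $ i)" for h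
      using linear_cart_representation[OF has_derivative_linear[OF d], of h]
      by (simp add: \<mu>_def sum_negf mult.commute)
    then have "F = (\<lambda>h. - (\<Sum>i\<in>UNIV. \<mu> i * h $ i))" by blast
    with d have d\<mu>: "(\<sigma> has_derivative (\<lambda>h. - (\<Sum>i\<in>UNIV. \<mu> i * h $ i))) (at V)" by simp
    fix h
    have "ereal (- \<sigma> (V + h) - (\<Sum>x\<in>UNIV. \<nu> x * (V + h) $ x)) + ereal (\<Sum>x\<in>UNIV. \<nu> x * V $ x)
        \<le> penalty \<sigma> \<nu> + ereal (\<Sum>x\<in>UNIV. \<nu> x * V $ x)"
      unfolding penalty_def by (intro add_right_mono SUP_upper) simp
    also have "\<dots> \<le> penalty \<sigma> \<mu> + ereal (\<Sum>x\<in>UNIV. \<mu> x * V $ x)"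
      by (rule min[OF convex_risk_measure_derivative(1)[OF cr d\<mu>]])
    also have "\<dots> = ereal (- \<sigma> V)"
      by (simp add: convex_risk_measure_derivative(2)[OF cr d\<mu>])
    finally have "- \<sigma> (V + h) - (\<Sum>x\<in>UNIV. \<nu> x * h $ x) \<le> - \<sigma> V"
      by (simp add: distrib_left sum.distrib)
    then show "\<sigma> V + - (\<Sum>x\<in>UNIV. \<nu> x * h $ x) \<le> \<sigma> (V + h)" by simp
  qed
  ultimately show ?thesis by simp
qed

section \<open>Discounted occupancy measures\<close>

lemma is_dist_state_dist:
  assumes "is_dist \<rho>" and \<pi>: "\<And>s. is_dist (\<pi> s)" and K: "\<And>s a. is_dist (K s a)"
  shows "is_dist (state_dist \<rho> \<pi> K t)"
proof (induction t)
  case 0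
  then show ?case using assms(1) by simp
next
  case (Suc t)
  let ?d = "state_dist \<rho> \<pi> K t"
  have "(\<Sum>y\<in>UNIV. state_dist \<rho> \<pi> K (Suc t) y)
      = (\<Sum>s\<in>UNIV. ?d s * (\<Sum>a\<in>UNIV. \<pi> s a * (\<Sum>y\<in>UNIV. K s a y)))"
  proof -
    have "(\<Sum>y\<in>UNIV. state_dist \<rho> \<pi> K (Suc t) y)
        = (\<Sum>s\<in>UNIV. \<Sum>a\<in>UNIV. \<Sum>y\<in>UNIV. ?d s * (\<pi> s a * K s a y))"
      unfolding state_dist.simps sum_distrib_left by (subst sum.swap) (rule sum.cong, simp, rule sum.swap)
    then show ?thesis by (simp add: sum_distrib_left)
  qed
  also have "\<dots> = (\<Sum>s\<in>UNIV. ?d s)"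
    using \<pi> K by (simp add: is_dist_def)
  finally show ?case
    using Suc \<pi> K unfolding is_dist_def
    by (auto intro!: sum_nonneg mult_nonneg_nonneg)
qed

lemma summable_discounted_state_dist:
  assumes "0 \<le> \<gamma>" "\<gamma> < 1" and "is_dist \<rho>" "\<And>s. is_dist (\<pi> s)" "\<And>s a. is_dist (K s a)"
  shows "summable (\<lambda>t. \<gamma> ^ t * state_dist \<rho> \<pi> K t y)"
proof (rule summable_comparison_test'[OF summable_geometric[of \<gamma>]])
  fix t
  have "is_dist (state_dist \<rho> \<pi> K t)" using assms(3-) by (rule is_dist_state_dist)
  then have "0 \<le> state_dist \<rho> \<pi> K t y" "state_dist \<rho> \<pi> K t y \<le> 1"
    unfolding is_dist_def using member_le_sum[of y UNIV "state_dist \<rho> \<pi> K t"] by auto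
  then show "norm (\<gamma> ^ t * state_dist \<rho> \<pi> K t y) \<le> \<gamma> ^ t"
    using assms(1) by (simp add: abs_mult mult_left_le)
qed (use assms in auto)

lemma occupancy_flow:
  assumes "0 \<le> \<gamma>" "\<gamma> < 1" and "is_dist \<rho>" "\<And>s. is_dist (\<pi> s)" "\<And>s a. is_dist (K s a)"
  shows "occupancy \<gamma> \<rho> \<pi> K y
    = (1 - \<gamma>) * \<rho> y + \<gamma> * (\<Sum>i\<in>UNIV. occupancy \<gamma> \<rho> \<pi> K i * (\<Sum>a\<in>UNIV. \<pi> i a * K i a y))"
proof -
  define w where "w i = (\<Sum>t. \<gamma> ^ t * state_dist \<rho> \<pi> K t i)" for i
  have sm: "summable (\<lambda>t. \<gamma> ^ t * state_dist \<rho> \<pi> K t i)" for i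
    using assms by (rule summable_discounted_state_dist)
  have "w y = \<rho> y + (\<Sum>t. \<gamma> ^ Suc t * state_dist \<rho> \<pi> K (Suc t) y)"
    using suminf_split_head[OF sm[of y]] by (simp add: w_def)
  also have "(\<Sum>t. \<gamma> ^ Suc t * state_dist \<rho> \<pi> K (Suc t) y)
      = (\<Sum>t. \<gamma> * (\<Sum>i\<in>UNIV. \<gamma> ^ t * state_dist \<rho> \<pi> K t i * (\<Sum>a\<in>UNIV. \<pi> i a * K i a y)))"
    by (simp add: sum_distrib_left mult.assoc mult.left_commute)
  also have "\<dots> = \<gamma> * (\<Sum>i\<in>UNIV. w i * (\<Sum>a\<in>UNIV. \<pi> i a * K i a y))"
    by (simp add: w_def suminf_mult suminf_sum suminf_mult2[OF sm] summable_sum summable_mult2 sm)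
  finally show ?thesis
    by (simp add: occupancy_def w_def[symmetric] sum_distrib_left algebra_simps)
qed

lemma occupancy_dual:
  assumes "0 \<le> \<gamma>" "\<gamma> < 1" and "is_dist \<rho>" "\<And>s. is_dist (\<pi> s)" "\<And>s a. is_dist (K s a)"
  shows "(1 - \<gamma>) * (\<Sum>y\<in>UNIV. \<rho> y * x y)
    = (\<Sum>i\<in>UNIV. occupancy \<gamma> \<rho> \<pi> K i * (x i - \<gamma> * (\<Sum>a\<in>UNIV. \<pi> i a * (\<Sum>y\<in>UNIV. K i a y * x y))))"
proof -
  let ?d = "occupancy \<gamma> \<rho> \<pi> K"
  define S where "S y = (\<Sum>i\<in>UNIV. ?d i * (\<Sum>a\<in>UNIV. \<pi> i a * K i a y))" for y
  have "(\<Sum>i\<in>UNIV. ?d i * (\<Sum>a\<in>UNIV. \<pi> i a * (\<Sum>y\<in>UNIV. K i a y * x y)))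
      = (\<Sum>i\<in>UNIV. \<Sum>y\<in>UNIV. \<Sum>a\<in>UNIV. ?d i * (\<pi> i a * (K i a y * x y)))"
    unfolding sum_distrib_left by (intro sum.cong refl sum.swap)
  also have "\<dots> = (\<Sum>y\<in>UNIV. S y * x y)"
    unfolding S_def sum_distrib_left sum_distrib_right by (subst sum.swap) (simp add: mult.assoc)
  finally have swap: "(\<Sum>i\<in>UNIV. ?d i * (\<Sum>a\<in>UNIV. \<pi> i a * (\<Sum>y\<in>UNIV. K i a y * x y)))
      = (\<Sum>y\<in>UNIV. S y * x y)" .
  have linear: "(\<Sum>i\<in>UNIV. ?d i * (x i - \<gamma> * A i)) = (\<Sum>i\<in>UNIV. ?d i * x i) - \<gamma> * (\<Sum>i\<in>UNIV. ?d i * A i)"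
    for A by (simp add: right_diff_distrib sum_subtractf sum_distrib_left mult.left_commute)
  have "(\<Sum>i\<in>UNIV. ?d i * (x i - \<gamma> * (\<Sum>a\<in>UNIV. \<pi> i a * (\<Sum>y\<in>UNIV. K i a y * x y))))
      = (\<Sum>y\<in>UNIV. (?d y - \<gamma> * S y) * x y)"
    unfolding linear swap by (simp add: left_diff_distrib sum_subtractf sum_distrib_left mult.assoc)
  also have "\<dots> = (1 - \<gamma>) * (\<Sum>y\<in>UNIV. \<rho> y * x y)"
  proof -
    have "?d y - \<gamma> * S y = (1 - \<gamma>) * \<rho> y" for y
      using occupancy_flow[OF assms, where y = y] by (simp add: S_def)
    then show ?thesis by (simp add: sum_distrib_left mult.assoc)
  qed
  finally show ?thesis by simp
qed

section \<open>The robust Bellman operator\<close>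

definition bellman :: "(('s::finite \<Rightarrow> real) \<Rightarrow> real ^ 's \<Rightarrow> real) \<Rightarrow> ('s \<Rightarrow> 'a::finite \<Rightarrow> 's \<Rightarrow> real)
     \<Rightarrow> ('s \<Rightarrow> 'a \<Rightarrow> real) \<Rightarrow> real \<Rightarrow> ('s \<Rightarrow> 'a \<Rightarrow> real) \<Rightarrow> real ^ 's \<Rightarrow> real ^ 's" where
  "bellman \<sigma> P r \<gamma> \<pi> V = (\<chi> s. \<Sum>a\<in>UNIV. \<pi> s a * (r s a - \<gamma> * \<sigma> (P s a) V))"

lemma bellman_diff:
  "(bellman \<sigma> P r \<gamma> \<pi> V - bellman \<sigma> P r \<gamma> \<pi> W) $ s
     = - \<gamma> * (\<Sum>a\<in>UNIV. \<pi> s a * (\<sigma> (P s a) V - \<sigma> (P s a) W))"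
  unfolding bellman_def vector_minus_component vec_lambda_beta sum_subtractf[symmetric] sum_distrib_left
  by (rule sum.cong) (simp_all add: algebra_simps)

lemma bellman_perturb:
  "bellman \<sigma> P r \<gamma> (perturb \<theta> s a t) V $ i
     = bellman \<sigma> P r \<gamma> \<theta> V $ i + (if i = s then t * (r s a - \<gamma> * \<sigma> (P s a) V) else 0)"
proof -
  have "(\<Sum>a'\<in>UNIV. (if i = s \<and> a' = a then t else 0) * (r i a' - \<gamma> * \<sigma> (P i a') V))
      = (\<Sum>a'\<in>UNIV. if a' = a then (if i = s then t * (r s a - \<gamma> * \<sigma> (P s a) V) else 0) else 0)"
    by (rule sum.cong) auto
  then show ?thesis
    unfolding bellman_def perturb_def vec_lambda_beta distrib_right sum.distrib by simp
qed

lemma sum_abs_perturb_le: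
  assumes "is_dist (\<theta> s')"
  shows "(\<Sum>a'\<in>UNIV. \<bar>perturb \<theta> s a t s' a'\<bar>) \<le> 1 + \<bar>t\<bar>"
proof -
  have "(\<Sum>a'\<in>UNIV. \<bar>perturb \<theta> s a t s' a'\<bar>)
      \<le> (\<Sum>a'\<in>UNIV. \<theta> s' a') + (\<Sum>a'\<in>UNIV. \<bar>if s' = s \<and> a' = a then t else 0\<bar>)"
    unfolding sum.distrib[symmetric] perturb_def
    using assms by (intro sum_mono) (auto simp: is_dist_def intro!: order_trans[OF abs_triangle_ineq])
  also have "\<dots> \<le> 1 + \<bar>t\<bar>"
    using assms by (cases "s' = s") (simp_all add: is_dist_def if_distrib sum.delta cong: if_cong)
  finally show ?thesis .
qed

locale risk_averse_mdp =
  fixes \<sigma> :: "('s::finite \<Rightarrow> real) \<Rightarrow> real ^ 's \<Rightarrow> real"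
    and P :: "'s \<Rightarrow> 'a::finite \<Rightarrow> 's \<Rightarrow> real"
    and r :: "'s \<Rightarrow> 'a \<Rightarrow> real"
    and \<gamma> :: real
  assumes risk: "\<And>s a. convex_risk_measure (\<sigma> (P s a))"
    and discount: "0 \<le> \<gamma>" "\<gamma> < 1"
begin

lemma bellman_infnorm_contraction:
  assumes k: "\<And>s. (\<Sum>a\<in>UNIV. \<bar>\<pi> s a\<bar>) \<le> k"
  shows "infnorm (bellman \<sigma> P r \<gamma> \<pi> V - bellman \<sigma> P r \<gamma> \<pi> W) \<le> \<gamma> * k * infnorm (V - W)"
  unfolding infnorm_le_iff_cart
proof
  fix s
  have "\<bar>\<pi> s a * (\<sigma> (P s a) V - \<sigma> (P s a) W)\<bar> \<le> \<bar>\<pi> s a\<bar> * infnorm (V - W)" for a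
    unfolding abs_mult by (rule mult_left_mono[OF convex_risk_measure_abs_diff_le[OF risk]]) simp
  then have "\<bar>\<Sum>a\<in>UNIV. \<pi> s a * (\<sigma> (P s a) V - \<sigma> (P s a) W)\<bar> \<le> (\<Sum>a\<in>UNIV. \<bar>\<pi> s a\<bar>) * infnorm (V - W)"
    unfolding sum_distrib_right by (rule order_trans[OF sum_abs sum_mono])
  also have "\<dots> \<le> k * infnorm (V - W)"
    using k infnorm_pos_le by (rule mult_right_mono)
  finally show "\<bar>(bellman \<sigma> P r \<gamma> \<pi> V - bellman \<sigma> P r \<gamma> \<pi> W) $ s\<bar> \<le> \<gamma> * k * infnorm (V - W)"
    using discount(1) unfolding bellman_diff abs_mult mult.assoc
    by (simp add: mult_left_mono)
qed

lemma bellman_Vpi: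
  assumes k: "\<And>s. (\<Sum>a\<in>UNIV. \<bar>\<pi> s a\<bar>) \<le> k" and "\<gamma> * k < 1"
  shows "bellman \<sigma> P r \<gamma> \<pi> (Vpi \<sigma> P r \<gamma> \<pi>) = Vpi \<sigma> P r \<gamma> \<pi>"
proof -
  have "0 \<le> k" using k[of undefined] by (meson order_trans sum_nonneg abs_ge_zero)
  have ex1: "\<exists>!V. bellman \<sigma> P r \<gamma> \<pi> V = V"
  proof (rule infnorm_contraction_ex1_fixpoint)
    show "0 \<le> \<gamma> * k" using \<open>0 \<le> k\<close> discount(1) by simp
  qed (fact, rule bellman_infnorm_contraction[OF k])
  have fixpoint_iff: "(\<forall>s. V $ s = (\<Sum>a\<in>UNIV. \<pi> s a * (r s a - \<gamma> * \<sigma> (P s a) V)))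
      \<longleftrightarrow> bellman \<sigma> P r \<gamma> \<pi> V = V" for V
    by (auto simp: bellman_def vec_eq_iff)
  show ?thesis
    unfolding Vpi_def fixpoint_iff by (rule theI'[OF ex1])
qed

lemma bellman_Vpi_perturb:
  assumes policy: "\<And>s'. is_dist (\<theta> s')" and t: "\<bar>t\<bar> \<le> (1 - \<gamma>) / 2"
  shows "bellman \<sigma> P r \<gamma> (perturb \<theta> s a t) (Vpi \<sigma> P r \<gamma> (perturb \<theta> s a t))
    = Vpi \<sigma> P r \<gamma> (perturb \<theta> s a t)"
proof (rule bellman_Vpi)
  show "(\<Sum>a'\<in>UNIV. \<bar>perturb \<theta> s a t s' a'\<bar>) \<le> 1 + \<bar>t\<bar>" for s'
    using policy by (rule sum_abs_perturb_le)
  have "\<gamma> * \<bar>t\<bar> \<le> \<bar>t\<bar>" using discount by (simp add: mult_left_le_one_le)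
  then show "\<gamma> * (1 + \<bar>t\<bar>) < 1" using t discount by (simp add: algebra_simps)
qed

lemma bellman_Vpi_policy:
  assumes "\<And>s'. is_dist (\<theta> s')"
  shows "bellman \<sigma> P r \<gamma> \<theta> (Vpi \<sigma> P r \<gamma> \<theta>) = Vpi \<sigma> P r \<gamma> \<theta>"
proof -
  have "perturb \<theta> s a 0 = \<theta>" for s a by (simp add: perturb_def)
  then show ?thesis using bellman_Vpi_perturb[where \<theta> = \<theta> and t = 0, OF assms] discount by simp
qed

lemma Vpi_perturb_infnorm_le:
  assumes policy: "\<And>s'. is_dist (\<theta> s')" and t: "\<bar>t\<bar> \<le> (1 - \<gamma>) / 2"
  shows "infnorm (Vpi \<sigma> P r \<gamma> (perturb \<theta> s a t) - Vpi \<sigma> P r \<gamma> \<theta>)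
    \<le> 2 * \<bar>Qpi \<sigma> P r \<gamma> \<theta> s a\<bar> / (1 - \<gamma>) * \<bar>t\<bar>"
proof -
  let ?T = "bellman \<sigma> P r \<gamma> (perturb \<theta> s a t)" and ?V = "Vpi \<sigma> P r \<gamma> \<theta>"
  let ?c = "\<gamma> * (1 + \<bar>t\<bar>)" and ?e = "\<bar>t\<bar> * \<bar>Qpi \<sigma> P r \<gamma> \<theta> s a\<bar>"
  have "infnorm (?T ?V - ?V) \<le> ?e"
    unfolding infnorm_le_iff_cart
  proof
    fix i
    have "(?T ?V - ?V) $ i = (if i = s then t * Qpi \<sigma> P r \<gamma> \<theta> s a else 0)"
      using bellman_perturb[of \<sigma> P r \<gamma> \<theta> s a t ?V i] bellman_Vpi_policy[OF policy]
      by (simp add: Qpi_def)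
    then show "\<bar>(?T ?V - ?V) $ i\<bar> \<le> ?e" by (simp add: abs_mult)
  qed
  have "\<gamma> * \<bar>t\<bar> \<le> \<bar>t\<bar>" using discount by (simp add: mult_left_le_one_le)
  then have c: "(1 - \<gamma>) / 2 \<le> 1 - ?c" using t by (simp add: field_simps)
  have "infnorm (Vpi \<sigma> P r \<gamma> (perturb \<theta> s a t) - ?V) \<le> infnorm (?T ?V - ?V) / (1 - ?c)"
  proof (rule infnorm_contraction_fixpoint_dist)
    show "?c < 1" using c discount by (simp add: field_simps)
    show "infnorm (?T x - ?T y) \<le> ?c * infnorm (x - y)" for x y
      using bellman_infnorm_contraction sum_abs_perturb_le[where \<theta> = \<theta>, OF policy] by blast
  qed (rule bellman_Vpi_perturb[OF policy t])
  also have "\<dots> \<le> ?e / ((1 - \<gamma>) / 2)"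
    using \<open>infnorm (?T ?V - ?V) \<le> ?e\<close> c discount by (intro frac_le infnorm_pos_le) auto
  also have "\<dots> = 2 * \<bar>Qpi \<sigma> P r \<gamma> \<theta> s a\<bar> / (1 - \<gamma>) * \<bar>t\<bar>" by simp
  finally show ?thesis .
qed

lemma eventually_small_perturbation: "eventually (\<lambda>t. t \<noteq> 0 \<and> \<bar>t\<bar> \<le> (1 - \<gamma>) / 2) (at (0::real))"
  unfolding eventually_at using discount by (intro exI[of _ "(1 - \<gamma>) / 2"]) (auto simp: dist_real_def)

lemma eventually_Vpi_perturb_lipschitz:
  assumes "\<And>s'. is_dist (\<theta> s')"
  shows "eventually (\<lambda>t. norm (Vpi \<sigma> P r \<gamma> (perturb \<theta> s a t) - Vpi \<sigma> P r \<gamma> \<theta>)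
    \<le> sqrt CARD('s) * (2 * \<bar>Qpi \<sigma> P r \<gamma> \<theta> s a\<bar> / (1 - \<gamma>)) * \<bar>t\<bar>) (at 0)"
  using eventually_small_perturbation
proof eventually_elim
  case (elim t)
  then show ?case
    using order_trans[OF norm_le_infnorm mult_left_mono[OF Vpi_perturb_infnorm_le[OF assms]]]
    by (simp add: mult.assoc)
qed

lemma perturbed_value_difference:
  assumes "is_dist \<rho>" "\<And>s'. is_dist (\<theta> s')" "\<And>s' a'. is_dist (Phat s' a')"
    and X_fix: "bellman \<sigma> P r \<gamma> (perturb \<theta> s a t) X = X" and Y_fix: "bellman \<sigma> P r \<gamma> \<theta> Y = Y"
  shows "(1 - \<gamma>) * ((\<Sum>y\<in>UNIV. \<rho> y * X $ y) - (\<Sum>y\<in>UNIV. \<rho> y * Y $ y))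
    = occupancy \<gamma> \<rho> \<theta> Phat s * (t * (r s a - \<gamma> * \<sigma> (P s a) X))
      - \<gamma> * (\<Sum>i\<in>UNIV. occupancy \<gamma> \<rho> \<theta> Phat i * (\<Sum>a'\<in>UNIV. \<theta> i a' *
          (\<sigma> (P i a') X - \<sigma> (P i a') Y + (\<Sum>y\<in>UNIV. Phat i a' y * (X $ y - Y $ y)))))"
proof -
  let ?d = "occupancy \<gamma> \<rho> \<theta> Phat" and ?q = "t * (r s a - \<gamma> * \<sigma> (P s a) X)"
  define A where "A i = (\<Sum>a'\<in>UNIV. \<theta> i a' * (\<sigma> (P i a') X - \<sigma> (P i a') Y))" for i
  define B where "B i = (\<Sum>a'\<in>UNIV. \<theta> i a' * (\<Sum>y\<in>UNIV. Phat i a' y * (X $ y - Y $ y)))" for i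
  have "X $ i - Y $ i = (bellman \<sigma> P r \<gamma> \<theta> X - bellman \<sigma> P r \<gamma> \<theta> Y) $ i + (if i = s then ?q else 0)"
    for i using bellman_perturb[of \<sigma> P r \<gamma> \<theta> s a t X i] X_fix Y_fix
    by (metis vector_minus_component diff_add_eq)
  then have "X $ i - Y $ i - \<gamma> * B i = (if i = s then ?q else 0) - \<gamma> * (A i + B i)" for i
    unfolding bellman_diff A_def[symmetric] by (simp add: algebra_simps)
  then have "(1 - \<gamma>) * (\<Sum>y\<in>UNIV. \<rho> y * (X $ y - Y $ y))
      = (\<Sum>i\<in>UNIV. ?d i * ((if i = s then ?q else 0) - \<gamma> * (A i + B i)))"
    using occupancy_dual[where \<pi> = \<theta> and K = Phat and x = "\<lambda>y. X $ y - Y $ y", OF discount assms(1-3)]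
    by (simp add: B_def)
  also have "\<dots> = (\<Sum>i\<in>UNIV. if i = s then ?d i * ?q else 0) - \<gamma> * (\<Sum>i\<in>UNIV. ?d i * (A i + B i))"
    unfolding right_diff_distrib sum_subtractf sum_distrib_left
    by (intro arg_cong2[where f = minus] sum.cong) (simp_all add: algebra_simps)
  also have "(\<Sum>i\<in>UNIV. if i = s then ?d i * ?q else 0) = ?d s * ?q" by simp
  also have "(\<Sum>i\<in>UNIV. ?d i * (A i + B i)) = (\<Sum>i\<in>UNIV. ?d i * (\<Sum>a'\<in>UNIV. \<theta> i a' *
      (\<sigma> (P i a') X - \<sigma> (P i a') Y + (\<Sum>y\<in>UNIV. Phat i a' y * (X $ y - Y $ y)))))"
    unfolding A_def B_def by (simp add: distrib_left sum.distrib)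
  finally show ?thesis by (simp add: sum_subtractf right_diff_distrib)
qed

lemma perturbed_difference_quotient:
  fixes s :: 's and a :: 'a
  assumes "is_dist \<rho>" and policy: "\<And>s'. is_dist (\<theta> s')" and "\<And>s' a'. is_dist (Phat s' a')"
    and "t \<noteq> 0" and t: "\<bar>t\<bar> \<le> (1 - \<gamma>) / 2"
  defines "X \<equiv> Vpi \<sigma> P r \<gamma> (perturb \<theta> s a t)" and "Y \<equiv> Vpi \<sigma> P r \<gamma> \<theta>"
  shows "((\<Sum>y\<in>UNIV. \<rho> y * X $ y) - (\<Sum>y\<in>UNIV. \<rho> y * Y $ y)) / t
    = (occupancy \<gamma> \<rho> \<theta> Phat s * (r s a - \<gamma> * \<sigma> (P s a) X)
      - \<gamma> * (\<Sum>i\<in>UNIV. occupancy \<gamma> \<rho> \<theta> Phat i * (\<Sum>a'\<in>UNIV. \<theta> i a' *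
          ((\<sigma> (P i a') X - \<sigma> (P i a') Y + (\<Sum>y\<in>UNIV. Phat i a' y * (X $ y - Y $ y))) / t)))) / (1 - \<gamma>)"
proof -
  let ?d = "occupancy \<gamma> \<rho> \<theta> Phat"
  have scale: "t * (c - \<gamma> * (\<Sum>i\<in>UNIV. ?d i * (\<Sum>a'\<in>UNIV. \<theta> i a' * (E i a' / t))))
      = t * c - \<gamma> * (\<Sum>i\<in>UNIV. ?d i * (\<Sum>a'\<in>UNIV. \<theta> i a' * E i a'))" for c E
    using \<open>t \<noteq> 0\<close> by (simp add: right_diff_distrib sum_distrib_left mult_ac)
  have "(1 - \<gamma>) * ((\<Sum>y\<in>UNIV. \<rho> y * X $ y) - (\<Sum>y\<in>UNIV. \<rho> y * Y $ y))
      = t * (?d s * (r s a - \<gamma> * \<sigma> (P s a) X)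
        - \<gamma> * (\<Sum>i\<in>UNIV. ?d i * (\<Sum>a'\<in>UNIV. \<theta> i a' *
          ((\<sigma> (P i a') X - \<sigma> (P i a') Y + (\<Sum>y\<in>UNIV. Phat i a' y * (X $ y - Y $ y))) / t))))"
    unfolding scale mult.left_commute[of t]
    using perturbed_value_difference[OF assms(1-3) bellman_Vpi_perturb[OF policy t]
        bellman_Vpi_policy[OF policy]]
    by (simp add: X_def Y_def)
  then show ?thesis using \<open>t \<noteq> 0\<close> discount by (simp add: field_simps)
qed

lemma tendsto_perturbed_difference_quotient:
  assumes rho: "is_dist \<rho>" and policy: "\<And>s'. is_dist (\<theta> s')" and Phat: "\<And>s' a'. is_dist (Phat s' a')"
    and grad: "\<And>i a'. (\<sigma> (P i a') has_derivative (\<lambda>h. - (\<Sum>y\<in>UNIV. Phat i a' y * h $ y)))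
      (at (Vpi \<sigma> P r \<gamma> \<theta>))"
  shows "((\<lambda>t. ((\<Sum>y\<in>UNIV. \<rho> y * Vpi \<sigma> P r \<gamma> (perturb \<theta> s a t) $ y)
      - (\<Sum>y\<in>UNIV. \<rho> y * Vpi \<sigma> P r \<gamma> \<theta> $ y)) / t)
    \<longlongrightarrow> occupancy \<gamma> \<rho> \<theta> Phat s * Qpi \<sigma> P r \<gamma> \<theta> s a / (1 - \<gamma>)) (at 0)"
proof -
  define V where "V t = Vpi \<sigma> P r \<gamma> (perturb \<theta> s a t)" for t
  let ?V0 = "Vpi \<sigma> P r \<gamma> \<theta>" and ?d = "occupancy \<gamma> \<rho> \<theta> Phat"
  define R where "R t i a' = (\<sigma> (P i a') (V t) - \<sigma> (P i a') ?V0
      + (\<Sum>y\<in>UNIV. Phat i a' y * (V t $ y - ?V0 $ y))) / t" for t i a'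
  have lip: "eventually (\<lambda>t. norm (V t - ?V0)
      \<le> sqrt CARD('s) * (2 * \<bar>Qpi \<sigma> P r \<gamma> \<theta> s a\<bar> / (1 - \<gamma>)) * \<bar>t\<bar>) (at 0)"
    unfolding V_def by (rule eventually_Vpi_perturb_lipschitz[OF policy])
  have "((\<lambda>t. R t i a') \<longlongrightarrow> 0) (at 0)" for i a'
    using has_derivative_remainder_lipschitz[OF grad lip] by (simp add: R_def divide_inverse mult.commute)
  moreover have "((\<lambda>t. r s a - \<gamma> * \<sigma> (P s a) (V t)) \<longlongrightarrow> Qpi \<sigma> P r \<gamma> \<theta> s a) (at 0)"
    using isCont_tendsto_compose[OF has_derivative_continuous[OF grad] tendsto_at_0_of_lipschitz[OF lip]]
    unfolding Qpi_def by (intro tendsto_intros)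
  ultimately have "((\<lambda>t. (?d s * (r s a - \<gamma> * \<sigma> (P s a) (V t))
      - \<gamma> * (\<Sum>i\<in>UNIV. ?d i * (\<Sum>a'\<in>UNIV. \<theta> i a' * R t i a'))) / (1 - \<gamma>))
      \<longlongrightarrow> (?d s * Qpi \<sigma> P r \<gamma> \<theta> s a - \<gamma> * (\<Sum>i\<in>UNIV. ?d i * (\<Sum>a'\<in>UNIV. \<theta> i a' * 0))) / (1 - \<gamma>))
      (at 0)"
    by (intro tendsto_intros) (use discount in auto)
  moreover have "eventually (\<lambda>t. ((\<Sum>y\<in>UNIV. \<rho> y * V t $ y) - (\<Sum>y\<in>UNIV. \<rho> y * ?V0 $ y)) / t
      = (?d s * (r s a - \<gamma> * \<sigma> (P s a) (V t))
        - \<gamma> * (\<Sum>i\<in>UNIV. ?d i * (\<Sum>a'\<in>UNIV. \<theta> i a' * R t i a'))) / (1 - \<gamma>)) (at 0)"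
    using eventually_small_perturbation
  proof eventually_elim
    case (elim t)
    then show ?case
      using perturbed_difference_quotient[where t = t and s = s and a = a, OF rho policy Phat]
      by (simp add: V_def R_def)
  qed
  ultimately show ?thesis unfolding V_def by (subst tendsto_cong) auto
qed

end

theorem mainTheorem7:
  fixes P :: "'s::finite \<Rightarrow> 'a::finite \<Rightarrow> 's \<Rightarrow> real"
    and \<sigma> :: "('s \<Rightarrow> real) \<Rightarrow> real ^ 's \<Rightarrow> real"
    and r :: "'s \<Rightarrow> 'a \<Rightarrow> real"
    and \<gamma> :: real
    and \<rho> :: "'s \<Rightarrow> real"
    and \<theta> :: "'s \<Rightarrow> 'a \<Rightarrow> real"
    and Phat :: "'s \<Rightarrow> 'a \<Rightarrow> 's \<Rightarrow> real"
    and s :: 's and a :: 'a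
  assumes P_dist: "\<And>s a. is_dist (P s a)"
    and r_range: "\<And>s a. 0 \<le> r s a \<and> r s a \<le> 1"
    and gamma: "0 \<le> \<gamma>" "\<gamma> < 1"
    and rho: "is_dist \<rho>"
    and risk: "\<And>s a. convex_risk_measure (\<sigma> (P s a))"
    and diff: "\<And>s a V. \<sigma> (P s a) differentiable (at V)"
    and policy: "\<And>s'. is_dist (\<theta> s')"
    and Phat_dist: "\<And>s' a'. is_dist (Phat s' a')"
    and Phat_min: "\<And>s' a' \<mu>. is_dist \<mu> \<Longrightarrow>
        penalty (\<sigma> (P s' a')) (Phat s' a')
          + ereal (\<Sum>x\<in>UNIV. Phat s' a' x * Vpi \<sigma> P r \<gamma> \<theta> $ x)
        \<le> penalty (\<sigma> (P s' a')) \<mu> + ereal (\<Sum>x\<in>UNIV. \<mu> x * Vpi \<sigma> P r \<gamma> \<theta> $ x)"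
  shows "((\<lambda>t. \<Sum>s0\<in>UNIV. \<rho> s0 * Vpi \<sigma> P r \<gamma> (perturb \<theta> s a t) $ s0)
           has_real_derivative
           (1 / (1 - \<gamma>)) * occupancy \<gamma> \<rho> \<theta> Phat s * Qpi \<sigma> P r \<gamma> \<theta> s a) (at 0)"
proof -
  interpret risk_averse_mdp \<sigma> P r \<gamma> using risk gamma by unfold_locales
  have "(\<sigma> (P i a') has_derivative (\<lambda>h. - (\<Sum>y\<in>UNIV. Phat i a' y * h $ y))) (at (Vpi \<sigma> P r \<gamma> \<theta>))"
    for i a' using convex_risk_measure_has_derivative_minimizer[OF risk diff Phat_min] .
  from tendsto_perturbed_difference_quotient[OF rho policy Phat_dist this, of s a]
  show ?thesis
    unfolding has_field_derivative_iff by (simp add: perturb_def)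
qed

end
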